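(* Let $n\in\mathbb{N}$. Every edge of $\Gamma_0(n)\cdot I$ is an edge of both $\mathcal{F}$ and $\frac1n\mathcal{F}$. Moreover, the set of edges $\Gamma_0(n)\cdot I$ equals the set of edges common to $\mathcal{F}$ and $\frac1n\mathcal{F}$ if and only if $n$ is a prime power.
   Context: The Farey tessellation $\mathcal{F}$ is the ideal triangulation of the upper half-plane with vertex set $\mathbb{Q}\cup\{\infty\}$ ($\infty=\frac10$) whose edges are the geodesics joining reduced fractions $\frac pq,\frac rs$ with $|ps-qr|=1$. $\frac1n\mathcal{F}$ is the image of $\mathcal{F}$ under $z\mapsto z/n$. $I$ is the geodesic from $0$ to $\infty$, $\Gamma_0(n)=\{\begin{pmatrix}a&b\\c&d\end{pmatrix}\in PSL_2(\mathbb{Z}): c\equiv0\pmod n\}$ acting by Möbius transformations, and $\Gamma_0(n)\cdot I=\{\phi(I):\phi\in\Gamma_0(n)\}$. (Prime powers include $n=p^\ell$ with $\ell\ge0$.) *)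

theory Defs
  imports Complex_Main "HOL-Computational_Algebra.Primes"
begin

text \<open>Points of Q \<union> {\<infinity>} are modelled as rat option: None = \<infinity> = 1/0, Some r = r.\<close>

definition frac :: "rat option \<Rightarrow> int \<times> int" where
  "frac x = (case x of None \<Rightarrow> (1, 0) | Some r \<Rightarrow> quotient_of r)"

definition farey_adj :: "rat option \<Rightarrow> rat option \<Rightarrow> bool" where
  "farey_adj x y = (let (p, q) = frac x; (r, s) = frac y in \<bar>p * s - q * r\<bar> = 1)"

definition farey_edges :: "rat option set set" where
  "farey_edges = {{x, y} | x y. farey_adj x y}"

definition scale :: "nat \<Rightarrow> rat option \<Rightarrow> rat option" where
  "scale n x = map_option (\<lambda>r. r / of_nat n) x"

definition scaled_farey_edges :: "nat \<Rightarrow> rat option set set" where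
  "scaled_farey_edges n = (\<lambda>e. scale n ` e) ` farey_edges"

definition moebius :: "int \<Rightarrow> int \<Rightarrow> int \<Rightarrow> int \<Rightarrow> rat option \<Rightarrow> rat option" where
  "moebius a b c d x = (case x of
      None \<Rightarrow> (if c = 0 then None else Some (of_int a / of_int c))
    | Some r \<Rightarrow> (if of_int c * r + of_int d = 0 then None
                 else Some ((of_int a * r + of_int b) / (of_int c * r + of_int d))))"

text \<open>Gamma_0(n): integer matrices of determinant 1 with n dividing c
  (matrices and their negatives act identically, so this gives the PSL_2 action).\<close>
definition Gamma0 :: "nat \<Rightarrow> (int \<times> int \<times> int \<times> int) set" where
  "Gamma0 n = {(a, b, c, d). a * d - b * c = 1 \<and> int n dvd c}"

text \<open>I is the geodesic from 0 to \<infinity>, i.e. the edge {0, \<infinity>}; its orbit under Gamma_0(n).\<close>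
definition I_edge :: "rat option set" where
  "I_edge = {Some 0, None}"

definition Gamma0_orbit_I :: "nat \<Rightarrow> rat option set set" where
  "Gamma0_orbit_I n = {moebius a b c d ` I_edge | a b c d. (a, b, c, d) \<in> Gamma0 n}"

end

theory Submission
  imports Defs
begin

text \<open>Write a Farey edge as \<open>{p/q, r/s}\<close> with \<open>|ps - qr| = 1\<close>; then \<open>q\<close> and \<open>s\<close> are coprime.
  The edge lies in \<open>\<Gamma>\<^sub>0(n)\<cdot>I\<close> iff \<open>n\<close> divides \<open>q\<close> or \<open>s\<close>, and (multiplying by \<open>n\<close>) in
  \<open>(1/n)\<F>\<close> iff \<open>n = gcd(n,q)\<cdot>gcd(n,s) = gcd(n,qs)\<close>, i.e. iff \<open>n\<close> divides \<open>qs\<close>. Since every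
  coprime pair \<open>q, s\<close> occurs, the two edge sets coincide iff \<open>n\<close> divides a factor whenever it
  divides a product of coprime integers, which characterises prime powers.\<close>

definition proj_point :: "int \<Rightarrow> int \<Rightarrow> rat option" where
  "proj_point p q = (if q = 0 then None else Some (of_int p / of_int q))"

definition unscale :: "nat \<Rightarrow> rat option \<Rightarrow> rat option" where
  "unscale n x = map_option (\<lambda>r. r * of_nat n) x"

lemma dvd_gcd_mult_gcd_if_dvd_mult:
  fixes n q s :: int
  assumes "n dvd q * s"
  shows "n dvd gcd n q * gcd n s"
proof -
  have "n dvd gcd (q * s) (n * s)" using assms by simp
  then have "n dvd \<bar>gcd n q * s\<bar>" by (simp add: gcd_mult_right gcd.commute abs_mult)
  then have "n dvd gcd n q * s" by simp
  moreover have "n dvd gcd n q * n" by simp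
  ultimately have "n dvd gcd (gcd n q * s) (gcd n q * n)" by simp
  then show ?thesis by (simp add: gcd_mult_left gcd.commute)
qed

lemma gcd_mult_coprime_right:
  fixes n q s :: int
  assumes "coprime q s"
  shows "gcd n (q * s) = gcd n q * gcd n s"
proof (rule zdvd_antisym_nonneg)
  have "coprime (gcd n q) (gcd n s)"
    using assms by (meson coprime_divisors gcd_dvd2)
  then have "gcd n q * gcd n s dvd n" by (simp add: divides_mult)
  moreover have "gcd n q * gcd n s dvd q * s" by (simp add: mult_dvd_mono)
  ultimately show "gcd n q * gcd n s dvd gcd n (q * s)" by simp
  have "gcd n (q * s) dvd gcd (gcd n (q * s)) q * gcd (gcd n (q * s)) s"
    by (rule dvd_gcd_mult_gcd_if_dvd_mult) simp
  also have "\<dots> dvd gcd n q * gcd n s"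
    by (intro mult_dvd_mono gcd_mono) simp_all
  finally show "gcd n (q * s) dvd gcd n q * gcd n s" .
qed simp_all

subsection \<open>Prime powers\<close>

lemma prime_power_dvd_coprime_mult:
  fixes p q s :: "'a :: factorial_semiring_gcd"
  assumes "prime p" "coprime q s" "p ^ k dvd q * s"
  shows "p ^ k dvd q \<or> p ^ k dvd s"
proof (cases "p dvd q")
  case True
  have "\<not> p dvd s"
  proof
    assume "p dvd s"
    then have "is_unit p" by (rule coprime_common_divisor[OF assms(2) True])
    with assms(1) show False by (simp add: not_prime_unit)
  qed
  then have "coprime p s" by (rule prime_imp_coprime[OF assms(1)])
  then have "coprime (p ^ k) s" by simp
  then show ?thesis using assms(3) by (simp add: coprime_dvd_mult_left_iff)
next
  case False
  then have "coprime p q" by (rule prime_imp_coprime[OF assms(1)])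
  then have "coprime (p ^ k) q" by simp
  then show ?thesis using assms(3) by (simp add: coprime_dvd_mult_right_iff)
qed

lemma coprime_factorization_if_not_prime_power:
  fixes n :: nat
  assumes "n \<ge> 1" "\<nexists>p k. prime p \<and> n = p ^ k"
  obtains u v where "coprime u v" "n = u * v" "u > 1" "v > 1"
proof -
  have "n \<noteq> 1" using assms(2) by (metis power_0 two_is_prime_nat)
  then obtain p where p: "prime p" "p dvd n" using prime_factor_nat by blast
  define u where "u = p ^ multiplicity p n"
  define v where "v = n div u"
  have "n = u * v" unfolding v_def u_def by (simp add: multiplicity_dvd)
  have "multiplicity p n > 0"
    using p assms(1) prime_multiplicity_gt_zero_iff[of p n] by simp
  then have "u > 1" unfolding u_def using one_less_power prime_gt_1_nat p(1) by blast
  have "v \<noteq> 1" using \<open>n = u * v\<close> assms(2) p(1) u_def by (metis mult.right_neutral)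
  moreover have "v \<noteq> 0" using \<open>n = u * v\<close> assms(1) by auto
  moreover have "\<not> p dvd v"
    unfolding v_def u_def using assms(1) p(1) by (intro multiplicity_decompose) auto
  then have "coprime u v" unfolding u_def using p(1) prime_imp_coprime by auto
  ultimately show ?thesis using that \<open>n = u * v\<close> \<open>u > 1\<close> by simp
qed

lemma prime_power_iff_dvd_coprime_mult:
  fixes n :: nat
  assumes "n \<ge> 1"
  shows "(\<forall>q s :: int. coprime q s \<longrightarrow> int n dvd q * s \<longrightarrow> int n dvd q \<or> int n dvd s) \<longleftrightarrow>
    (\<exists>p k. prime p \<and> n = p ^ k)"
proof
  assume dvd_factor: "\<forall>q s :: int. coprime q s \<longrightarrow> int n dvd q * s \<longrightarrow> int n dvd q \<or> int n dvd s"
  show "\<exists>p k. prime p \<and> n = p ^ k"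
  proof (rule ccontr)
    assume "\<nexists>p k. prime p \<and> n = p ^ k"
    then obtain u v where "coprime u v" "n = u * v" "u > 1" "v > 1"
      using coprime_factorization_if_not_prime_power assms by blast
    then have "int n dvd int u \<or> int n dvd int v"
      using dvd_factor[rule_format, of "int u" "int v"] by simp
    then show False
      using \<open>n = u * v\<close> \<open>u > 1\<close> \<open>v > 1\<close> by (auto dest!: dvd_imp_le)
  qed
next
  assume "\<exists>p k. prime p \<and> n = p ^ k"
  then obtain p k where "prime p" "n = p ^ k" by blast
  then show "\<forall>q s :: int. coprime q s \<longrightarrow> int n dvd q * s \<longrightarrow> int n dvd q \<or> int n dvd s"
    using prime_power_dvd_coprime_mult[of "int p"] by simp
qed

subsection \<open>Homogeneous coordinates on \<open>\<rat> \<union> {\<infinity>}\<close>\<close>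

lemma proj_point_frac: "proj_point (fst (frac x)) (snd (frac x)) = x"
proof (cases x)
  case (Some r)
  obtain p q where pq: "quotient_of r = (p, q)" by (cases "quotient_of r")
  then show ?thesis
    using Some quotient_of_denom_pos[OF pq] quotient_of_div[OF pq]
    by (simp add: proj_point_def frac_def)
qed (simp add: proj_point_def frac_def)

lemma coprime_frac: "coprime (fst (frac x)) (snd (frac x))"
proof (cases x)
  case (Some r)
  obtain p q where pq: "quotient_of r = (p, q)" by (cases "quotient_of r")
  then show ?thesis using Some quotient_of_coprime[OF pq] by (simp add: frac_def)
qed (simp add: frac_def)

lemma proj_point_mult_cancel: "k \<noteq> 0 \<Longrightarrow> proj_point (k * p) (k * q) = proj_point p q"
  by (simp add: proj_point_def)

lemma proj_point_uminus: "proj_point (- p) (- q) = proj_point p q"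
  using proj_point_mult_cancel[of "-1"] by simp

lemma frac_proj_point:
  assumes "coprime p q"
  shows "frac (proj_point p q) = (p, q) \<or> frac (proj_point p q) = (- p, - q)"
proof -
  have quotient: "quotient_of (of_int p' / of_int q') = (p', q')"
    if "coprime p' q'" "q' > 0" for p' q'
    using that by (metis Fract_of_int_quotient normalize_stable quotient_of_Fract)
  consider "q = 0" | "q > 0" | "q < 0" by linarith
  then show ?thesis
  proof cases
    case 1
    then have "p = 1 \<or> p = -1" using assms by auto
    then show ?thesis using 1 by (auto simp: proj_point_def frac_def)
  next
    case 2
    then show ?thesis using quotient[OF assms] by (simp add: proj_point_def frac_def)
  next
    case 3
    have "of_int p / of_int q = (of_int (- p) / of_int (- q) :: rat)" by simp
    then show ?thesis
      using quotient[of "- p" "- q"] assms 3 by (simp add: proj_point_def frac_def)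
  qed
qed

lemma proj_point_abs_denom_eq:
  assumes "coprime p q" "coprime p' q'" "proj_point p q = proj_point p' q'"
  shows "\<bar>q\<bar> = \<bar>q'\<bar>"
proof -
  have "\<bar>snd (frac (proj_point p q))\<bar> = \<bar>q\<bar>" "\<bar>snd (frac (proj_point p' q'))\<bar> = \<bar>q'\<bar>"
    using frac_proj_point[OF assms(1)] frac_proj_point[OF assms(2)] by auto
  then show ?thesis using assms(3) by simp
qed

lemma frac_proj_point_rescale:
  assumes "p \<noteq> 0 \<or> q \<noteq> 0"
  obtains k where "\<bar>k\<bar> = gcd p q" "p = k * fst (frac (proj_point p q))"
    "q = k * snd (frac (proj_point p q))"
proof -
  define g where "g = gcd p q"
  have "g > 0" using assms by (auto simp: g_def)
  define p' q' where "p' = p div g" and "q' = q div g"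
  have p: "p = g * p'" and q: "q = g * q'" by (simp_all add: p'_def q'_def g_def)
  have "coprime p' q'" unfolding p'_def q'_def g_def using div_gcd_coprime assms by blast
  moreover have "proj_point p q = proj_point p' q'"
    using p q \<open>g > 0\<close> proj_point_mult_cancel by simp
  ultimately consider "frac (proj_point p q) = (p', q')" | "frac (proj_point p q) = (- p', - q')"
    using frac_proj_point[of p' q'] by argo
  then show ?thesis
  proof cases
    case 1
    then show ?thesis using that[of g] p q \<open>g > 0\<close> unfolding g_def by simp
  next
    case 2
    then show ?thesis using that[of "- g"] p q \<open>g > 0\<close> unfolding g_def by simp
  qed
qed

lemma coprime_if_abs_det_eq_1:
  fixes p q r s :: int
  assumes "\<bar>p * s - q * r\<bar> = 1"
  shows "coprime p q" "coprime r s" "coprime p r" "coprime q s"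
proof -
  have unit: "x dvd 1" if "x dvd p * s - q * r" for x
    using assms that by (metis dvd_abs_iff)
  show "coprime p q" "coprime r s" "coprime p r" "coprime q s"
    by (rule coprimeI; rule unit; simp)+
qed

lemma farey_adj_proj_point:
  assumes "p \<noteq> 0 \<or> q \<noteq> 0" "r \<noteq> 0 \<or> s \<noteq> 0"
  shows "farey_adj (proj_point p q) (proj_point r s) \<longleftrightarrow> \<bar>p * s - q * r\<bar> = gcd p q * gcd r s"
proof -
  obtain k where k: "\<bar>k\<bar> = gcd p q" "p = k * fst (frac (proj_point p q))"
    "q = k * snd (frac (proj_point p q))"
    using frac_proj_point_rescale[OF assms(1)] .
  obtain l where l: "\<bar>l\<bar> = gcd r s" "r = l * fst (frac (proj_point r s))"
    "s = l * snd (frac (proj_point r s))"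
    using frac_proj_point_rescale[OF assms(2)] .
  obtain p' q' where pq: "frac (proj_point p q) = (p', q')" by fastforce
  obtain r' s' where rs: "frac (proj_point r s) = (r', s')" by fastforce
  have "p * s - q * r = (k * l) * (p' * s' - q' * r')"
    using k l pq rs by (simp add: algebra_simps)
  then have "\<bar>p * s - q * r\<bar> = (gcd p q * gcd r s) * \<bar>p' * s' - q' * r'\<bar>"
    using k(1) l(1) by (simp add: abs_mult)
  moreover have "gcd p q * gcd r s > 0" using assms by simp
  ultimately show ?thesis using pq rs assms by (auto simp: farey_adj_def)
qed

lemma farey_adj_sym: "farey_adj x y \<Longrightarrow> farey_adj y x"
  unfolding farey_adj_def by (auto split: prod.splits simp: abs_minus_commute mult.commute)

lemma doubleton_in_farey_edges_iff: "{x, y} \<in> farey_edges \<longleftrightarrow> farey_adj x y"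
proof
  assume "{x, y} \<in> farey_edges"
  then obtain x' y' where "{x, y} = {x', y'}" "farey_adj x' y'" by (auto simp: farey_edges_def)
  then show "farey_adj x y" using farey_adj_sym by (auto simp: doubleton_eq_iff)
qed (auto simp: farey_edges_def)

lemma proj_point_edge_in_farey_edges:
  assumes "\<bar>p * s - q * r\<bar> = 1"
  shows "{proj_point p q, proj_point r s} \<in> farey_edges"
proof -
  note cop = coprime_if_abs_det_eq_1[OF assms]
  have "p \<noteq> 0 \<or> q \<noteq> 0" "r \<noteq> 0 \<or> s \<noteq> 0" using cop(1,2) by auto
  then show ?thesis
    using farey_adj_proj_point cop assms by (simp add: doubleton_in_farey_edges_iff coprime_iff_gcd_eq_1)
qed

lemma farey_edgesE:
  assumes "e \<in> farey_edges"
  obtains p q r s where "\<bar>p * s - q * r\<bar> = 1" "e = {proj_point p q, proj_point r s}"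
proof -
  obtain x y where e: "e = {x, y}" and adj: "farey_adj x y" using assms by (auto simp: farey_edges_def)
  obtain p q where pq: "frac x = (p, q)" by fastforce
  obtain r s where rs: "frac y = (r, s)" by fastforce
  have "\<bar>p * s - q * r\<bar> = 1" using adj pq rs by (simp add: farey_adj_def)
  moreover have "e = {proj_point p q, proj_point r s}"
    using e pq rs proj_point_frac[of x] proj_point_frac[of y] by simp
  ultimately show ?thesis using that by blast
qed

subsection \<open>Edges of the rescaled tessellation\<close>

lemma scaled_farey_edges_iff:
  assumes "n \<ge> 1"
  shows "e \<in> scaled_farey_edges n \<longleftrightarrow> unscale n ` e \<in> farey_edges"
proof -
  have unscale_scale: "unscale n (scale n x) = x" for x
    using assms by (cases x) (auto simp: unscale_def scale_def)
  have scale_unscale: "scale n (unscale n x) = x" for x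
    using assms by (cases x) (auto simp: unscale_def scale_def)
  show ?thesis
  proof
    assume "e \<in> scaled_farey_edges n"
    then obtain f where "f \<in> farey_edges" "e = scale n ` f" by (auto simp: scaled_farey_edges_def)
    then show "unscale n ` e \<in> farey_edges" by (simp add: image_image unscale_scale)
  next
    assume "unscale n ` e \<in> farey_edges"
    moreover have "e = scale n ` unscale n ` e" by (simp add: image_image scale_unscale)
    ultimately show "e \<in> scaled_farey_edges n" unfolding scaled_farey_edges_def by blast
  qed
qed

lemma unscale_proj_point: "unscale n (proj_point p q) = proj_point (int n * p) q"
  by (simp add: unscale_def proj_point_def)

lemma proj_point_edge_in_scaled_farey_edges_iff:
  assumes n: "n \<ge> 1" and det: "\<bar>p * s - q * r\<bar> = 1"
  shows "{proj_point p q, proj_point r s} \<in> scaled_farey_edges n \<longleftrightarrow> int n dvd q * s"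
proof -
  note cop = coprime_if_abs_det_eq_1[OF det]
  have gcd_pq: "gcd (int n * p) q = gcd (int n) q"
    using cop(1) by (simp add: gcd_mult_left_right_cancel coprime_commute)
  have gcd_rs: "gcd (int n * r) s = gcd (int n) s"
    using cop(2) by (simp add: gcd_mult_left_right_cancel coprime_commute)
  have nonzero: "int n * p \<noteq> 0 \<or> q \<noteq> 0" "int n * r \<noteq> 0 \<or> s \<noteq> 0"
    using cop(1,2) n by auto
  have "int n * p * s - q * (int n * r) = int n * (p * s - q * r)" by (simp add: algebra_simps)
  then have "\<bar>int n * p * s - q * (int n * r)\<bar> = int n" using det by (simp add: abs_mult)
  then have "{proj_point p q, proj_point r s} \<in> scaled_farey_edges n \<longleftrightarrow>
      int n = gcd (int n) q * gcd (int n) s"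
    using farey_adj_proj_point[OF nonzero]
    by (simp add: scaled_farey_edges_iff[OF n] unscale_proj_point doubleton_in_farey_edges_iff
        gcd_pq gcd_rs)
  also have "\<dots> \<longleftrightarrow> int n = gcd (int n) (q * s)"
    using cop(4) by (simp add: gcd_mult_coprime_right)
  also have "\<dots> \<longleftrightarrow> int n dvd q * s"
    using n by (metis gcd_dvd2 gcd_unique_int of_nat_0_le_iff dvd_refl)
  finally show ?thesis .
qed

subsection \<open>The orbit of \<open>I\<close> under \<open>\<Gamma>\<^sub>0(n)\<close>\<close>

lemma Gamma0_orbit_I_iff:
  "e \<in> Gamma0_orbit_I n \<longleftrightarrow>
    (\<exists>a b c d. a * d - b * c = 1 \<and> int n dvd c \<and> e = {proj_point b d, proj_point a c})"
proof -
  have "moebius a b c d ` I_edge = {proj_point b d, proj_point a c}" for a b c d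
    by (simp add: I_edge_def moebius_def proj_point_def)
  then show ?thesis by (auto simp: Gamma0_orbit_I_def Gamma0_def)
qed

lemma Gamma0_orbit_I_subset_farey_edges: "Gamma0_orbit_I n \<subseteq> farey_edges"
proof
  fix e assume "e \<in> Gamma0_orbit_I n"
  then obtain a b c d where "a * d - b * c = 1" "e = {proj_point b d, proj_point a c}"
    by (auto simp: Gamma0_orbit_I_iff)
  moreover from this have "\<bar>b * c - d * a\<bar> = 1" by (simp add: algebra_simps)
  ultimately show "e \<in> farey_edges" using proj_point_edge_in_farey_edges by simp
qed

lemma proj_point_edge_in_Gamma0_orbit_I_if_dvd:
  assumes "\<bar>p * s - q * r\<bar> = 1" "int n dvd q"
  shows "{proj_point p q, proj_point r s} \<in> Gamma0_orbit_I n"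
proof -
  consider "p * s - q * r = 1" | "(- p) * s - (- q) * r = 1" using assms(1) by linarith
  then show ?thesis
  proof cases
    case 1
    then show ?thesis using assms(2) unfolding Gamma0_orbit_I_iff
      by (intro exI[of _ p] exI[of _ r] exI[of _ q] exI[of _ s]) (auto simp: algebra_simps)
  next
    case 2
    then show ?thesis using assms(2) unfolding Gamma0_orbit_I_iff
      by (intro exI[of _ "- p"] exI[of _ r] exI[of _ "- q"] exI[of _ s])
        (auto simp: algebra_simps proj_point_uminus)
  qed
qed

lemma proj_point_edge_in_Gamma0_orbit_I_iff:
  assumes det: "\<bar>p * s - q * r\<bar> = 1"
  shows "{proj_point p q, proj_point r s} \<in> Gamma0_orbit_I n \<longleftrightarrow> int n dvd q \<or> int n dvd s"
proof
  assume "{proj_point p q, proj_point r s} \<in> Gamma0_orbit_I n"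
  then obtain a b c d where "a * d - b * c = 1" "int n dvd c"
    and e: "{proj_point p q, proj_point r s} = {proj_point b d, proj_point a c}"
    by (auto simp: Gamma0_orbit_I_iff)
  then have "coprime a c" using coprime_if_abs_det_eq_1(3)[of a d b c] by simp
  moreover have "proj_point a c = proj_point p q \<or> proj_point a c = proj_point r s"
    using e by (auto simp: doubleton_eq_iff)
  ultimately have "\<bar>c\<bar> = \<bar>q\<bar> \<or> \<bar>c\<bar> = \<bar>s\<bar>"
    using proj_point_abs_denom_eq coprime_if_abs_det_eq_1[OF det] by blast
  with \<open>int n dvd c\<close> show "int n dvd q \<or> int n dvd s"
    by (metis dvd_abs_iff)
next
  have det': "\<bar>r * q - s * p\<bar> = 1" using det by (simp add: abs_minus_commute mult.commute)
  assume "int n dvd q \<or> int n dvd s"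
  then show "{proj_point p q, proj_point r s} \<in> Gamma0_orbit_I n"
    using proj_point_edge_in_Gamma0_orbit_I_if_dvd[OF det]
      proj_point_edge_in_Gamma0_orbit_I_if_dvd[OF det'] by (auto simp: insert_commute)
qed

lemma Gamma0_orbit_I_subset_scaled_farey_edges:
  assumes "n \<ge> 1"
  shows "Gamma0_orbit_I n \<subseteq> scaled_farey_edges n"
proof
  fix e assume orbit: "e \<in> Gamma0_orbit_I n"
  then have "e \<in> farey_edges" using Gamma0_orbit_I_subset_farey_edges by blast
  then obtain p q r s where det: "\<bar>p * s - q * r\<bar> = 1" and e: "e = {proj_point p q, proj_point r s}"
    by (rule farey_edgesE)
  then have "int n dvd q \<or> int n dvd s"
    using orbit proj_point_edge_in_Gamma0_orbit_I_iff by blast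
  then have "int n dvd q * s" by auto
  then show "e \<in> scaled_farey_edges n"
    using e proj_point_edge_in_scaled_farey_edges_iff[OF assms det] by simp
qed

lemma farey_scaled_subset_Gamma0_orbit_I_iff:
  assumes "n \<ge> 1"
  shows "farey_edges \<inter> scaled_farey_edges n \<subseteq> Gamma0_orbit_I n \<longleftrightarrow>
    (\<forall>q s :: int. coprime q s \<longrightarrow> int n dvd q * s \<longrightarrow> int n dvd q \<or> int n dvd s)"
proof
  assume subset: "farey_edges \<inter> scaled_farey_edges n \<subseteq> Gamma0_orbit_I n"
  show "\<forall>q s :: int. coprime q s \<longrightarrow> int n dvd q * s \<longrightarrow> int n dvd q \<or> int n dvd s"
  proof (intro allI impI)
    fix q s :: int
    assume "coprime q s" "int n dvd q * s"
    obtain p r' where "p * s + r' * q = 1"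
      using bezout_int[of s q] \<open>coprime q s\<close> by (auto simp: coprime_iff_gcd_eq_1 gcd.commute)
    then have det: "\<bar>p * s - q * (- r')\<bar> = 1" by (simp add: algebra_simps)
    then have "{proj_point p q, proj_point (- r') s} \<in> Gamma0_orbit_I n"
      using subset proj_point_edge_in_farey_edges
        proj_point_edge_in_scaled_farey_edges_iff[OF assms] \<open>int n dvd q * s\<close> by blast
    then show "int n dvd q \<or> int n dvd s"
      using proj_point_edge_in_Gamma0_orbit_I_iff[OF det] by blast
  qed
next
  assume dvd_factor: "\<forall>q s :: int. coprime q s \<longrightarrow> int n dvd q * s \<longrightarrow> int n dvd q \<or> int n dvd s"
  show "farey_edges \<inter> scaled_farey_edges n \<subseteq> Gamma0_orbit_I n"
  proof
    fix e assume e_in: "e \<in> farey_edges \<inter> scaled_farey_edges n"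
    then obtain p q r s where det: "\<bar>p * s - q * r\<bar> = 1" and e: "e = {proj_point p q, proj_point r s}"
      by (auto elim: farey_edgesE)
    then have "int n dvd q * s"
      using e_in proj_point_edge_in_scaled_farey_edges_iff[OF assms det] by simp
    then have "int n dvd q \<or> int n dvd s"
      using dvd_factor coprime_if_abs_det_eq_1(4)[OF det] by blast
    then show "e \<in> Gamma0_orbit_I n" using e proj_point_edge_in_Gamma0_orbit_I_iff[OF det] by simp
  qed
qed

theorem corollary3p9:
  fixes n :: nat
  assumes "n \<ge> 1"
  shows "Gamma0_orbit_I n \<subseteq> farey_edges \<inter> scaled_farey_edges n \<and>
         (Gamma0_orbit_I n = farey_edges \<inter> scaled_farey_edges n \<longleftrightarrow>
           (\<exists>p k. prime p \<and> n = p ^ k))"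
proof -
  have subset: "Gamma0_orbit_I n \<subseteq> farey_edges \<inter> scaled_farey_edges n"
    using Gamma0_orbit_I_subset_farey_edges Gamma0_orbit_I_subset_scaled_farey_edges[OF assms]
    by blast
  then have "Gamma0_orbit_I n = farey_edges \<inter> scaled_farey_edges n \<longleftrightarrow>
      farey_edges \<inter> scaled_farey_edges n \<subseteq> Gamma0_orbit_I n"
    by blast
  also have "\<dots> \<longleftrightarrow> (\<exists>p k. prime p \<and> n = p ^ k)"
    using farey_scaled_subset_Gamma0_orbit_I_iff[OF assms] prime_power_iff_dvd_coprime_mult[OF assms]
    by simp
  finally show ?thesis using subset by blast
qed

end
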